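(* Let $0<\alpha_\mathcal{A}<1$, $0\le\epsilon<1$, and suppose every non-adversarial pool has share $\alpha_i<0.4302$. Consider the Markov chain on the fork states $(0,0),(1,0),(2,0),(1,1)$ describing the selfish mining strategy $\pi^{\mathrm{selfish}}$, where each step is the mining of one new block, with the following transitions and accounting (adversarial canonical blocks $A$, bribe units paid $C$, total blocks added to the canonical chain $B$): (i) from $(0,0)$: with probability $\alpha_\mathcal{A}$ go to $(1,0)$ ($A=C=B=0$); with probability $1-\alpha_\mathcal{A}$ stay at $(0,0)$ ($A=C=0$, $B=1$); (ii) from $(1,0)$: with probability $\alpha_\mathcal{A}$ go to $(2,0)$; with probability $1-\alpha_\mathcal{A}$ go to $(1,1)$ (in both cases $A=C=B=0$); (iii) from $(2,0)$: with probability $\alpha_\mathcal{A}$ stay at $(2,0)$ ($A=1$, $C=0$, $B=1$); with probability $1-\alpha_\mathcal{A}$ go to $(0,0)$ ($A=2$, $C=0$, $B=2$); (iv) from $(1,1)$, always going to $(0,0)$ with $B=2$: with probability $\alpha_\mathcal{A}$, $A=2$, $C=0$; with probability $1-\alpha_\mathcal{A}-\beta_\mathcal{A}$, $A=1$, $C=\epsilon$; with probability $\beta_\mathcal{A}$, $A=0$, $C=0$. Let $\mathbb{E}_\pi$ denote expectation of the one-step quantities under the stationary distribution $\pi$ of this chain, and define the time-averaged profit after difficulty adjustment as $\mathrm{Profit}(\pi^{\mathrm{selfish}})=\lambda R\,\frac{\mathbb{E}_\pi[A]-\mathbb{E}_\pi[C]}{\mathbb{E}_\pi[B]}$, where $\lambda>0$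 is the block rate of the canonical chain. Then $\mathrm{Profit}(\pi^{\mathrm{selfish}})>\alpha_\mathcal{A}\lambda R$ (the honest-mining profit) if (and in fact iff) $$\beta_\mathcal{A}<\frac{\alpha_\mathcal{A}-\epsilon(1-\alpha_\mathcal{A})^2}{(1-\alpha_\mathcal{A})(1-\epsilon)}.$$
   Context: Model: there is an adversarial mining pool $p_\mathcal{A}$ with mining-power share $\alpha_\mathcal{A}$ and non-adversarial (petty-compliant) pools $p_1,\dots,p_N$ with shares $\alpha_1,\dots,\alpha_N>0$, $\alpha_\mathcal{A}+\sum_i\alpha_i=1$; each new block is found by each pool with probability equal to its share. Block reward is a fixed $R>0$; a normalized bribe $\mathrm{br}$ means a payment of $\mathrm{br}\cdot R$; $\epsilon$ is the incentivizing factor of the environment. The residual centralization factor of the adversary is $\beta_\mathcal{A}=\frac{\sum_{i=1}^N\alpha_i^2}{1-\alpha_\mathcal{A}}$. The state $(l_\mathcal{A},l_\mathcal{R})$ records the lengths of the hidden adversarial fork and the public non-adversarial fork. In state $(1,1)$ the adversary has published its block with a normalized bribe $\epsilon$ on top; the pool that mined the competing block keeps mining on its own block and all other pools mine on the adversarial block; the bribe is paid only if a non-adversarial pool extends the adversarial block. The share bound $0.4302$ is the paper's condition guaranteeing that a pool whose one-block fork falls one block behind adopts the longer fork. *)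

theory Defs
  imports Complex_Main
begin

text \<open>Fork states (l_A, l_R) of the selfish mining chain.\<close>
datatype fstate = S00 | S10 | S20 | S11

definition fstates :: "fstate set" where
  "fstates = {S00, S10, S20, S11}"

definition residual_centralization :: "real \<Rightarrow> (nat \<Rightarrow> real) \<Rightarrow> nat \<Rightarrow> real" where
  "residual_centralization aA alpha N = (\<Sum>i=1..N. (alpha i)^2) / (1 - aA)"

text \<open>One-step transitions of pi^selfish: list of (probability, next state, A, C, B),
  A = adversarial canonical blocks, C = bribe units paid, B = canonical blocks added.\<close>
fun selfish_trans :: "real \<Rightarrow> real \<Rightarrow> real \<Rightarrow> fstate \<Rightarrow> (real \<times> fstate \<times> real \<times> real \<times> real) list" where
  "selfish_trans aA beta eps S00 = [(aA, S10, 0, 0, 0), (1 - aA, S00, 0, 0, 1)]"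
| "selfish_trans aA beta eps S10 = [(aA, S20, 0, 0, 0), (1 - aA, S11, 0, 0, 0)]"
| "selfish_trans aA beta eps S20 = [(aA, S20, 1, 0, 1), (1 - aA, S00, 2, 0, 2)]"
| "selfish_trans aA beta eps S11 = [(aA, S00, 2, 0, 2), (1 - aA - beta, S00, 1, eps, 2), (beta, S00, 0, 0, 2)]"

definition trans_prob :: "real \<Rightarrow> real \<Rightarrow> real \<Rightarrow> fstate \<Rightarrow> fstate \<Rightarrow> real" where
  "trans_prob aA beta eps s s' =
     sum_list (map (\<lambda>(p, t, a, c, b). if t = s' then p else 0) (selfish_trans aA beta eps s))"

definition stationary :: "real \<Rightarrow> real \<Rightarrow> real \<Rightarrow> (fstate \<Rightarrow> real) \<Rightarrow> bool" where
  "stationary aA beta eps \<pi> \<longleftrightarrow>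
     (\<forall>s. 0 \<le> \<pi> s) \<and> (\<Sum>s\<in>fstates. \<pi> s) = 1 \<and>
     (\<forall>s'. (\<Sum>s\<in>fstates. \<pi> s * trans_prob aA beta eps s s') = \<pi> s')"

definition exp_A :: "real \<Rightarrow> real \<Rightarrow> real \<Rightarrow> (fstate \<Rightarrow> real) \<Rightarrow> real" where
  "exp_A aA beta eps \<pi> = (\<Sum>s\<in>fstates. \<pi> s *
     sum_list (map (\<lambda>(p, t, a, c, b). p * a) (selfish_trans aA beta eps s)))"

definition exp_C :: "real \<Rightarrow> real \<Rightarrow> real \<Rightarrow> (fstate \<Rightarrow> real) \<Rightarrow> real" where
  "exp_C aA beta eps \<pi> = (\<Sum>s\<in>fstates. \<pi> s *
     sum_list (map (\<lambda>(p, t, a, c, b). p * c) (selfish_trans aA beta eps s)))"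

definition exp_B :: "real \<Rightarrow> real \<Rightarrow> real \<Rightarrow> (fstate \<Rightarrow> real) \<Rightarrow> real" where
  "exp_B aA beta eps \<pi> = (\<Sum>s\<in>fstates. \<pi> s *
     sum_list (map (\<lambda>(p, t, a, c, b). p * b) (selfish_trans aA beta eps s)))"

definition selfish_profit :: "real \<Rightarrow> real \<Rightarrow> real \<Rightarrow> real \<Rightarrow> real \<Rightarrow> (fstate \<Rightarrow> real) \<Rightarrow> real" where
  "selfish_profit lam R aA beta eps \<pi> =
     lam * R * (exp_A aA beta eps \<pi> - exp_C aA beta eps \<pi>) / exp_B aA beta eps \<pi>"

end

theory Submission
  imports Defs
begin

text \<open>The balance equations of the chain determine the stationary distribution up to the mass
  p of the state (0,0): the states (1,0), (2,0), (1,1) carry a p, a^2 p / (1 - a) and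
  a (1 - a) p. Substituting into the expectations gives
  E[A] - E[C] - a E[B] = a p (a - (1 - a)(1 - eps) \<beta> - eps (1 - a)^2), and E[B] > 0, so the
  selfish profit exceeds the honest profit a \<lambda> R exactly when the last factor is positive.\<close>

lemma sum_fstates: "(\<Sum>s\<in>fstates. f s) = f S00 + f S10 + f S20 + (f S11 :: real)"
  by (simp add: fstates_def)

lemma exp_A_eq: "exp_A a b eps \<pi> = \<pi> S20 * (2 - a) + \<pi> S11 * (1 + a - b)"
  by (simp add: exp_A_def sum_fstates algebra_simps)

lemma exp_C_eq: "exp_C a b eps \<pi> = \<pi> S11 * eps * (1 - a - b)"
  by (simp add: exp_C_def sum_fstates algebra_simps)

lemma exp_B_eq: "exp_B a b eps \<pi> = \<pi> S00 * (1 - a) + \<pi> S20 * (2 - a) + 2 * \<pi> S11"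
  by (simp add: exp_B_def sum_fstates algebra_simps)

lemma stationary_balance:
  assumes "stationary a b eps \<pi>"
  shows "\<pi> S10 = a * \<pi> S00" and "\<pi> S20 = a * \<pi> S10 + a * \<pi> S20"
    and "\<pi> S11 = (1 - a) * \<pi> S10"
proof -
  have balance: "\<And>s'. (\<Sum>s\<in>fstates. \<pi> s * trans_prob a b eps s s') = \<pi> s'"
    using assms unfolding stationary_def by blast
  show "\<pi> S10 = a * \<pi> S00" using balance[of S10]
    by (simp add: sum_fstates trans_prob_def algebra_simps)
  show "\<pi> S20 = a * \<pi> S10 + a * \<pi> S20" using balance[of S20]
    by (simp add: sum_fstates trans_prob_def algebra_simps)
  show "\<pi> S11 = (1 - a) * \<pi> S10" using balance[of S11]
    by (simp add: sum_fstates trans_prob_def algebra_simps)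
qed

lemma stationary_closed_form:
  assumes "stationary a b eps \<pi>" and "a < 1"
  shows "\<pi> S10 = a * \<pi> S00" and "(1 - a) * \<pi> S20 = a\<^sup>2 * \<pi> S00"
    and "\<pi> S11 = (1 - a) * a * \<pi> S00"
  using stationary_balance[OF assms(1)] by (auto simp: algebra_simps power2_eq_square)

lemma stationary_S00_pos:
  assumes "stationary a b eps \<pi>" and "a < 1"
  shows "0 < \<pi> S00"
proof (rule ccontr)
  assume "\<not> 0 < \<pi> S00"
  moreover have "0 \<le> \<pi> S00" and total: "\<pi> S00 + \<pi> S10 + \<pi> S20 + \<pi> S11 = 1"
    using assms(1) unfolding stationary_def sum_fstates by auto
  ultimately have "\<pi> S00 = 0" by simp
  with stationary_closed_form[OF assms] assms(2) have "\<pi> S10 = 0" "\<pi> S20 = 0" "\<pi> S11 = 0"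
    by simp_all
  with \<open>\<pi> S00 = 0\<close> total show False by simp
qed

lemma exp_B_pos:
  assumes "stationary a b eps \<pi>" and "0 < a" and "a < 1"
  shows "0 < exp_B a b eps \<pi>"
proof -
  have "0 < \<pi> S00" using stationary_S00_pos assms by blast
  moreover have "0 \<le> \<pi> S20" "0 \<le> \<pi> S11"
    using assms(1) unfolding stationary_def by auto
  ultimately show ?thesis
    unfolding exp_B_eq using assms(3) by (intro add_pos_nonneg) auto
qed

lemma selfish_margin_eq:
  assumes "stationary a b eps \<pi>" and "a < 1"
  shows "exp_A a b eps \<pi> - exp_C a b eps \<pi> - a * exp_B a b eps \<pi>
       = a * \<pi> S00 * (a - (1 - a) * (1 - eps) * b - eps * (1 - a)\<^sup>2)"
proof -
  note closed = stationary_closed_form[OF assms]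
  have "exp_A a b eps \<pi> - exp_C a b eps \<pi> - a * exp_B a b eps \<pi>
       - a * \<pi> S00 * (a - (1 - a) * (1 - eps) * b - eps * (1 - a)\<^sup>2)
       = (2 - a) * ((1 - a) * \<pi> S20 - a\<^sup>2 * \<pi> S00)"
    unfolding exp_A_eq exp_C_eq exp_B_eq closed(3) by (simp add: algebra_simps power2_eq_square)
  with closed(2) show ?thesis by simp
qed

lemma selfish_profit_gt_honest_iff:
  fixes a b eps lam R :: real
  assumes "stationary a b eps \<pi>" and "0 < a" and "a < 1" and "eps < 1"
    and "0 < lam" and "0 < R"
  shows "selfish_profit lam R a b eps \<pi> > a * lam * R
     \<longleftrightarrow> b < (a - eps * (1 - a)\<^sup>2) / ((1 - a) * (1 - eps))"
proof -
  have B_pos: "0 < exp_B a b eps \<pi>" using exp_B_pos assms by blast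
  have weight_pos: "0 < a * \<pi> S00" using stationary_S00_pos assms by simp
  have "selfish_profit lam R a b eps \<pi> > a * lam * R \<longleftrightarrow>
        lam * R * (a * exp_B a b eps \<pi>) < lam * R * (exp_A a b eps \<pi> - exp_C a b eps \<pi>)"
    unfolding selfish_profit_def using B_pos by (simp add: field_simps)
  also have "\<dots> \<longleftrightarrow> 0 < exp_A a b eps \<pi> - exp_C a b eps \<pi> - a * exp_B a b eps \<pi>"
    using assms(5,6) by simp
  also have "\<dots> \<longleftrightarrow> 0 < a - (1 - a) * (1 - eps) * b - eps * (1 - a)\<^sup>2"
    unfolding selfish_margin_eq[OF assms(1,3)] using mult_less_cancel_left_pos[OF weight_pos, of 0] by simp
  also have "\<dots> \<longleftrightarrow> b < (a - eps * (1 - a)\<^sup>2) / ((1 - a) * (1 - eps))"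
  proof -
    have "0 < (1 - a) * (1 - eps)" using assms(3,4) by simp
    then show ?thesis by (simp add: pos_less_divide_eq algebra_simps)
  qed
  finally show ?thesis .
qed

theorem theorem1:
  fixes aA eps lam R :: real and alpha :: "nat \<Rightarrow> real" and N :: nat
    and \<pi> :: "fstate \<Rightarrow> real"
  assumes "0 < aA" and "aA < 1"
    and "0 \<le> eps" and "eps < 1"
    and "\<forall>i\<in>{1..N}. 0 < alpha i"
    and "aA + (\<Sum>i=1..N. alpha i) = 1"
    and "\<forall>i\<in>{1..N}. alpha i < 0.4302"
    and "0 < lam" and "0 < R"
    and "stationary aA (residual_centralization aA alpha N) eps \<pi>"
  shows "selfish_profit lam R aA (residual_centralization aA alpha N) eps \<pi> > aA * lam * R
     \<longleftrightarrow> residual_centralization aA alpha N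
           < (aA - eps * (1 - aA)^2) / ((1 - aA) * (1 - eps))"
  using selfish_profit_gt_honest_iff assms by blast

end
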